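(* Let $0<r\le 1/2$, $0\le\rho\le 1$, and let $\alpha$ satisfy $0\le\alpha<r$, with $\alpha$ the asymptotic red edge fraction of the Biased Preferential Attachment Model described in the context. Define $$K_B=\frac12\left(\frac{r\rho}{\alpha+\rho(1-\alpha)}+\frac{1-r}{\alpha\rho+1-\alpha}\right),\qquad K_R=\frac12\left(\frac{r}{\alpha+\rho(1-\alpha)}+\frac{\rho(1-r)}{\alpha\rho+1-\alpha}\right),$$ and $\beta_B=1+1/K_B$, $\beta_R=1+1/K_R$. Then $$\frac{1}{\beta_R-1}>\frac{2}{\beta_B-1}-1,$$ equivalently $2K_B-1<K_R$.
   Context: In the BPAM, nodes arrive sequentially and are labeled red with probability $r$ (minority, $0<r\le1/2$) or blue with probability $1-r$. Each new node attaches by preferential attachment, with a cross-label edge accepted only with probability $\rho\in[0,1]$ (retrying otherwise), and every node has outdegree $d$. $\alpha$ denotes the limit as $N\to\infty$ of the expected fraction of the total degree $2Nd$ belonging to red nodes. It satisfies the power inequality $\alpha<r$. $\beta_B$ and $\beta_R$ are the power-law exponents of the asymptotic degree distributions of the blue and red communities, respectively. *)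

theory Defs
  imports Complex_Main
begin

text \<open>Constants K_B, K_R of the BPAM (blue/red degree-distribution constants),
  as functions of the minority probability r, the acceptance probability rho
  of cross-label edges, and the asymptotic red degree fraction alpha.\<close>

definition K_B :: "real \<Rightarrow> real \<Rightarrow> real \<Rightarrow> real" where
  "K_B r \<rho> \<alpha> = (1/2) * (r * \<rho> / (\<alpha> + \<rho> * (1 - \<alpha>)) + (1 - r) / (\<alpha> * \<rho> + 1 - \<alpha>))"

definition K_R :: "real \<Rightarrow> real \<Rightarrow> real \<Rightarrow> real" where
  "K_R r \<rho> \<alpha> = (1/2) * (r / (\<alpha> + \<rho> * (1 - \<alpha>)) + \<rho> * (1 - r) / (\<alpha> * \<rho> + 1 - \<alpha>))"

definition beta_B :: "real \<Rightarrow> real \<Rightarrow> real \<Rightarrow> real" where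
  "beta_B r \<rho> \<alpha> = 1 + 1 / K_B r \<rho> \<alpha>"

definition beta_R :: "real \<Rightarrow> real \<Rightarrow> real \<Rightarrow> real" where
  "beta_R r \<rho> \<alpha> = 1 + 1 / K_R r \<rho> \<alpha>"

end

theory Submission
  imports Defs
begin

text \<open>With \<open>A = \<alpha> + \<rho>(1 - \<alpha>)\<close> and \<open>B = \<alpha>\<rho> + 1 - \<alpha>\<close> the denominators of \<open>K_B\<close> and \<open>K_R\<close>,
  \<open>2AB (K_R - (2 K_B - 1))\<close> is the polynomial
  \<open>\<rho>\<^sup>2 + \<alpha>(1 - \<rho>)(1 - \<alpha> + 3\<alpha>\<rho>) + (r - \<alpha>)(1 + \<alpha>)(1 - \<rho>\<^sup>2)\<close>.
  All three terms are nonnegative, and the first and last cannot vanish together because of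
  the power inequality \<open>\<alpha> < r\<close>.\<close>

text \<open>\<open>A\<close> and \<open>B\<close> are the probabilities that one attachment attempt of a red, respectively blue,
  newcomer is accepted, when the proposed target is red with probability \<open>\<alpha>\<close>.\<close>

definition accept_red :: "real \<Rightarrow> real \<Rightarrow> real" where
  "accept_red \<alpha> \<rho> = \<alpha> + \<rho> * (1 - \<alpha>)"

definition accept_blue :: "real \<Rightarrow> real \<Rightarrow> real" where
  "accept_blue \<alpha> \<rho> = \<alpha> * \<rho> + 1 - \<alpha>"

lemma accept_red_eq_0_iff:
  assumes "0 \<le> \<alpha>" "0 \<le> \<rho>" "\<rho> \<le> 1"
  shows "accept_red \<alpha> \<rho> = 0 \<longleftrightarrow> \<alpha> = 0 \<and> \<rho> = 0"
proof -
  have "accept_red \<alpha> \<rho> = \<rho> + \<alpha> * (1 - \<rho>)"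
    by (simp add: accept_red_def algebra_simps)
  moreover have "0 \<le> \<alpha> * (1 - \<rho>)"
    using assms by simp
  ultimately have "accept_red \<alpha> \<rho> = 0 \<Longrightarrow> \<rho> = 0"
    using assms by linarith
  then show ?thesis
    by (auto simp: accept_red_def)
qed

lemma accept_blue_pos:
  assumes "0 \<le> \<alpha>" "\<alpha> < 1" "0 \<le> \<rho>"
  shows "0 < accept_blue \<alpha> \<rho>"
proof -
  have "0 \<le> \<alpha> * \<rho>"
    using assms by simp
  then show ?thesis
    unfolding accept_blue_def using assms by linarith
qed

lemma K_R_minus_twice_K_B:
  assumes "accept_red \<alpha> \<rho> \<noteq> 0" "accept_blue \<alpha> \<rho> \<noteq> 0"
  shows "K_R r \<rho> \<alpha> - (2 * K_B r \<rho> \<alpha> - 1) =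
    (\<rho>\<^sup>2 + \<alpha> * (1 - \<rho>) * (1 - \<alpha> + 3 * \<alpha> * \<rho>) + (r - \<alpha>) * (1 + \<alpha>) * (1 - \<rho>\<^sup>2))
      / (2 * accept_red \<alpha> \<rho> * accept_blue \<alpha> \<rho>)" (is "_ = ?rhs")
proof -
  have "K_R r \<rho> \<alpha> - (2 * K_B r \<rho> \<alpha> - 1) =
    (r * (1 - 2 * \<rho>) * accept_blue \<alpha> \<rho> + (1 - r) * (\<rho> - 2) * accept_red \<alpha> \<rho>
      + 2 * accept_red \<alpha> \<rho> * accept_blue \<alpha> \<rho>) / (2 * accept_red \<alpha> \<rho> * accept_blue \<alpha> \<rho>)"
    using assms unfolding K_R_def K_B_def accept_red_def [symmetric] accept_blue_def [symmetric]
    by (simp add: field_simps)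
  also have "\<dots> = ?rhs"
    by (simp add: accept_red_def accept_blue_def algebra_simps power2_eq_square)
  finally show ?thesis .
qed

lemma gap_numerator_pos:
  fixes r \<rho> \<alpha> :: real
  assumes "0 \<le> \<rho>" "\<rho> \<le> 1" "0 \<le> \<alpha>" "\<alpha> < r" "\<alpha> \<le> 1"
  shows "0 < \<rho>\<^sup>2 + \<alpha> * (1 - \<rho>) * (1 - \<alpha> + 3 * \<alpha> * \<rho>) + (r - \<alpha>) * (1 + \<alpha>) * (1 - \<rho>\<^sup>2)"
proof -
  have "0 \<le> \<alpha> * (1 - \<rho>) * (1 - \<alpha> + 3 * \<alpha> * \<rho>)"
    using assms by simp
  moreover have "0 < \<rho>\<^sup>2 + (r - \<alpha>) * (1 + \<alpha>) * (1 - \<rho>\<^sup>2)"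
  proof (cases "\<rho> = 1")
    case False
    then have "\<rho>\<^sup>2 < 1"
      using assms by (simp add: power_less_one_iff)
    then show ?thesis
      using assms by (simp add: add_nonneg_pos)
  qed simp
  ultimately show ?thesis
    by linarith
qed

theorem twice_K_B_minus_one_less_K_R:
  assumes "0 \<le> \<rho>" "\<rho> \<le> 1" "0 \<le> \<alpha>" "\<alpha> < r" "r \<le> 1"
  shows "2 * K_B r \<rho> \<alpha> - 1 < K_R r \<rho> \<alpha>"
proof (cases "\<alpha> = 0 \<and> \<rho> = 0")
  case True
  \<comment> \<open>Here \<open>K_R\<close> is really infinite; Isabelle's \<open>r / 0 = 0\<close> makes it \<open>0\<close>, still larger than \<open>-r\<close>.\<close>
  then show ?thesis
    using assms by (simp add: K_B_def K_R_def)
next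
  case False
  then have "accept_red \<alpha> \<rho> \<noteq> 0"
    using assms by (simp add: accept_red_eq_0_iff)
  moreover have "0 \<le> accept_red \<alpha> \<rho>"
    using assms by (simp add: accept_red_def)
  ultimately have "0 < accept_red \<alpha> \<rho>"
    by simp
  moreover have "0 < accept_blue \<alpha> \<rho>"
    using assms by (simp add: accept_blue_pos)
  ultimately have "0 < K_R r \<rho> \<alpha> - (2 * K_B r \<rho> \<alpha> - 1)"
    using gap_numerator_pos[of \<rho> \<alpha> r] assms by (simp add: K_R_minus_twice_K_B)
  then show ?thesis
    by simp
qed

theorem proposition5:
  fixes r \<rho> \<alpha> :: real
  assumes "0 < r" and "r \<le> 1/2"
    and "0 \<le> \<rho>" and "\<rho> \<le> 1"
    and "0 \<le> \<alpha>" and "\<alpha> < r"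
  shows "1 / (beta_R r \<rho> \<alpha> - 1) > 2 / (beta_B r \<rho> \<alpha> - 1) - 1
         \<and> 2 * K_B r \<rho> \<alpha> - 1 < K_R r \<rho> \<alpha>"
proof -
  have "1 / (beta_R r \<rho> \<alpha> - 1) = K_R r \<rho> \<alpha>" "2 / (beta_B r \<rho> \<alpha> - 1) = 2 * K_B r \<rho> \<alpha>"
    by (simp_all add: beta_R_def beta_B_def)
  moreover have "2 * K_B r \<rho> \<alpha> - 1 < K_R r \<rho> \<alpha>"
    using assms by (simp add: twice_K_B_minus_one_less_K_R)
  ultimately show ?thesis
    by simp
qed

end
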